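(* Let two players have arbitrary (not necessarily identical) valuations $v_1,v_2$ on a finite set of goods $M$. Let $(A_1,A_2)$ be a leximin++ solution for two players who both have valuation $v_1$. - If $v_2(A_1)\ge v_2(A_2)$, give $A_2$ to player 1 and $A_1$ to player 2. - Otherwise, give $A_1$ to player 1 and $A_2$ to player 2. The resulting allocation is EFX with respect to $(v_1,v_2)$.
   Context: A valuation is a function $v:2^M\to\mathbb{R}_{\ge0}$ with $v(\emptyset)=0$ that is monotone: $v(S)\le v(T)$ whenever $S\subseteq T$. An allocation is an ordered partition $(A_1,\dots,A_n)$ of $M$; parts may be empty. It is EFX if for all players $i,j$ and every $g\in A_j$ we have $v_i(A_i)\ge v_i(A_j\setminus\{g\})$. For an allocation $A$, let $X^A$ be the ordering of the players by increasing utility $v_i(A_i)$, with ties broken by increasing player index. The leximin++ comparison is defined as follows. For allocations $A$ and $B$, scan $\ell=1,\dots,n$, and let $i=X^A_\ell$ and $j=X^B_\ell$. - If $v_i(A_i)\ne v_j(B_j)$, stop: $A\prec_{++}B$ holds if and only if $v_i(A_i)<v_j(B_j)$. - Otherwise, if $|A_i|\ne|B_j|$, stop: $A\prec_{++}B$ holds if and only if $|A_i|<|B_j|$. - Otherwise continue to $\ell+1$. If the scan finishes without stopping, then $A\prec_{++}B$ is false. A leximin++ solution is an allocation $A$ that is maximal for this comparison: there is no allocation $B$ with $A\prec_{++}B$. *)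

theory Defs
  imports Complex_Main
begin

text \<open>Players are indexed by 0,...,n-1 (paper's player i+1 is index i).
 Goods form the finite set M. A valuation is given on subsets of M.\<close>

definition valuation :: "'g set \<Rightarrow> ('g set \<Rightarrow> real) \<Rightarrow> bool" where
  "valuation M v \<longleftrightarrow> v {} = 0 \<and> (\<forall>S. S \<subseteq> M \<longrightarrow> v S \<ge> 0)
     \<and> (\<forall>S T. S \<subseteq> T \<and> T \<subseteq> M \<longrightarrow> v S \<le> v T)"

definition is_allocation :: "nat \<Rightarrow> 'g set \<Rightarrow> (nat \<Rightarrow> 'g set) \<Rightarrow> bool" where
  "is_allocation n M A \<longleftrightarrow> (\<Union>i<n. A i) = M
     \<and> (\<forall>i<n. \<forall>j<n. i \<noteq> j \<longrightarrow> A i \<inter> A j = {})"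

definition EFX :: "nat \<Rightarrow> (nat \<Rightarrow> 'g set \<Rightarrow> real) \<Rightarrow> (nat \<Rightarrow> 'g set) \<Rightarrow> bool" where
  "EFX n v A \<longleftrightarrow> (\<forall>i<n. \<forall>j<n. \<forall>g\<in>A j. v i (A i) \<ge> v i (A j - {g}))"

text \<open>X^A: players ordered by increasing utility, ties broken by increasing index
 (sort_key is a stable sort applied to [0..<n], so equal keys keep increasing index order).\<close>
definition order_players :: "nat \<Rightarrow> (nat \<Rightarrow> 'g set \<Rightarrow> real) \<Rightarrow> (nat \<Rightarrow> 'g set) \<Rightarrow> nat list" where
  "order_players n v A = sort_key (\<lambda>i. v i (A i)) [0..<n]"

fun lex_scan :: "(nat \<Rightarrow> 'g set \<Rightarrow> real) \<Rightarrow> (nat \<Rightarrow> 'g set) \<Rightarrow> (nat \<Rightarrow> 'g set)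
                 \<Rightarrow> nat list \<Rightarrow> nat list \<Rightarrow> bool" where
  "lex_scan v A B (i # xs) (j # ys) =
     (if v i (A i) \<noteq> v j (B j) then v i (A i) < v j (B j)
      else if card (A i) \<noteq> card (B j) then card (A i) < card (B j)
      else lex_scan v A B xs ys)"
| "lex_scan v A B _ _ = False"

definition leximinpp_less :: "nat \<Rightarrow> (nat \<Rightarrow> 'g set \<Rightarrow> real) \<Rightarrow> (nat \<Rightarrow> 'g set) \<Rightarrow> (nat \<Rightarrow> 'g set) \<Rightarrow> bool" where
  "leximinpp_less n v A B = lex_scan v A B (order_players n v A) (order_players n v B)"

definition leximinpp_solution :: "nat \<Rightarrow> 'g set \<Rightarrow> (nat \<Rightarrow> 'g set \<Rightarrow> real) \<Rightarrow> (nat \<Rightarrow> 'g set) \<Rightarrow> bool" where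
  "leximinpp_solution n M v A \<longleftrightarrow> is_allocation n M A
     \<and> \<not> (\<exists>B. is_allocation n M B \<and> leximinpp_less n v A B)"

end

theory Submission
  imports Defs
begin

text \<open>For a common valuation v the leximin++ solution A is EFX: if some bundle A j, with a good g
  removed, were still worth more than A i, then moving g from A j to A i would strictly improve the
  smaller value, or keep it and enlarge the worse-off bundle, contradicting maximality.
  Player 1 then has no EFX-envy whichever bundle she gets, and player 2 receives the bundle she
  prefers, so she envies nobody at all.\<close>

lemma valuation_mono: "valuation M v \<Longrightarrow> S \<subseteq> T \<Longrightarrow> T \<subseteq> M \<Longrightarrow> v S \<le> v T"
  unfolding valuation_def by auto

lemma all_less_2_iff: "(\<forall>k<(2::nat). P k) \<longleftrightarrow> P 0 \<and> P 1"
  by (auto simp: less_2_cases_iff)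

lemma is_allocation_2_iff: "is_allocation 2 M A \<longleftrightarrow> A 0 \<union> A 1 = M \<and> A 0 \<inter> A 1 = {}"
  unfolding is_allocation_def all_less_2_iff by (auto simp: lessThan_Suc numeral_2_eq_2)

lemma is_allocation_2_move_good:
  assumes "is_allocation 2 M A" "i < 2" "j < 2" "i \<noteq> j" "g \<in> A j"
  shows "is_allocation 2 M (A(i := insert g (A i), j := A j - {g}))"
proof -
  have "(i = 0 \<and> j = 1) \<or> (i = 1 \<and> j = 0)" using assms(2-4) by auto
  then show ?thesis using assms(1,5) unfolding is_allocation_2_iff by auto
qed

lemma order_players_2:
  "order_players 2 v A = (if v 0 (A 0) \<le> v 1 (A 1) then [0, 1] else [1, 0])"
  by (simp add: order_players_def numeral_2_eq_2)

lemma leximinpp_less_2_by_minimum: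
  assumes "a < 2" "a' < 2" "v a (A a) < v a' (A a')"
    and "\<And>b. b < 2 \<Longrightarrow>
           v a (A a) < v b (B b) \<or> v a (A a) = v b (B b) \<and> card (A a) < card (B b)"
  shows "leximinpp_less 2 v A B"
proof -
  have "a \<noteq> a'" using assms(3) by auto
  then have "(a = 0 \<and> a' = 1) \<or> (a = 1 \<and> a' = 0)" using assms(1,2) by auto
  then have A_order: "order_players 2 v A = [a, a']" using assms(3) by (auto simp: order_players_2)
  obtain b b' where B_order: "order_players 2 v B = [b, b']" and "b < 2"
    by (cases "v 0 (B 0) \<le> v 1 (B 1)") (auto simp: order_players_2)
  then show ?thesis
    using assms(4)[of b] unfolding leximinpp_less_def A_order B_order by auto
qed

lemma leximinpp_less_move_good:
  fixes A :: "nat \<Rightarrow> 'g set" and i j :: nat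
  assumes val: "valuation M v" and "i < 2" "j < 2"
    and fin: "finite (A i)" and sub: "insert g (A i) \<subseteq> M" "A j \<subseteq> M"
    and g: "g \<in> A j" "g \<notin> A i"
    and envy: "v (A i) < v (A j - {g})"
  shows "leximinpp_less 2 (\<lambda>_. v) A (A(i := insert g (A i), j := A j - {g}))"
    (is "leximinpp_less 2 _ A ?B")
proof -
  have "i \<noteq> j" using g by auto
  have A_j: "v (A i) < v (A j)"
    using envy valuation_mono[OF val, of "A j - {g}" "A j"] sub by auto
  have B_i: "v (A i) \<le> v (?B i)" "card (A i) < card (?B i)"
    using valuation_mono[OF val, of "A i" "insert g (A i)"] sub fin g by auto
  have B_j: "v (A i) < v (?B j)" using envy \<open>i \<noteq> j\<close> by simp
  show ?thesis
  proof (rule leximinpp_less_2_by_minimum[OF \<open>i < 2\<close> \<open>j < 2\<close>])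
    fix b :: nat assume "b < 2"
    then have "b = i \<or> b = j" using \<open>i < 2\<close> \<open>j < 2\<close> \<open>i \<noteq> j\<close> by auto
    then show "v (A i) < v (?B b) \<or> v (A i) = v (?B b) \<and> card (A i) < card (?B b)"
      using B_i B_j by auto
  qed (use A_j in simp)
qed

theorem leximinpp_solution_2_EFX:
  assumes "finite M" and val: "valuation M v" and sol: "leximinpp_solution 2 M (\<lambda>_. v) A"
  shows "EFX 2 (\<lambda>_. v) A"
  unfolding EFX_def
proof (intro allI impI ballI)
  fix i j :: nat and g assume "i < 2" "j < 2" "g \<in> A j"
  have alloc: "is_allocation 2 M A" using sol unfolding leximinpp_solution_def by blast
  then have sub: "A i \<subseteq> M" "A j \<subseteq> M"
    using \<open>i < 2\<close> \<open>j < 2\<close> unfolding is_allocation_def by blast+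
  show "v (A j - {g}) \<le> v (A i)"
  proof (cases "i = j")
    case True
    then show ?thesis using valuation_mono[OF val, of "A j - {g}" "A j"] sub by auto
  next
    case False
    have "g \<notin> A i"
      using alloc \<open>i < 2\<close> \<open>j < 2\<close> False \<open>g \<in> A j\<close> unfolding is_allocation_def by blast
    show ?thesis
    proof (rule ccontr)
      assume "\<not> ?thesis"
      moreover have "finite (A i)" using finite_subset[OF sub(1) \<open>finite M\<close>] .
      moreover have "insert g (A i) \<subseteq> M" using sub \<open>g \<in> A j\<close> by blast
      ultimately have "leximinpp_less 2 (\<lambda>_. v) A (A(i := insert g (A i), j := A j - {g}))"
        using leximinpp_less_move_good[OF val \<open>i < 2\<close> \<open>j < 2\<close>] sub(2)
          \<open>g \<in> A j\<close> \<open>g \<notin> A i\<close> by simp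
      moreover have "is_allocation 2 M (A(i := insert g (A i), j := A j - {g}))"
        using is_allocation_2_move_good[OF alloc \<open>i < 2\<close> \<open>j < 2\<close> False \<open>g \<in> A j\<close>] .
      ultimately show False using sol unfolding leximinpp_solution_def by blast
    qed
  qed
qed

lemma EFX_2_assign_preferred_bundle:
  assumes EFX1: "EFX 2 (\<lambda>_. v1) A" and val2: "valuation M v2"
    and sub: "\<And>k. k < 2 \<Longrightarrow> A k \<subseteq> M"
    and \<sigma>: "\<sigma> 0 < 2" "\<sigma> 1 < 2" and prefers: "v2 (A (\<sigma> 0)) \<le> v2 (A (\<sigma> 1))"
  shows "EFX 2 (\<lambda>i. if i = 0 then v1 else v2) (A \<circ> \<sigma>)"
proof -
  have "v1 (A (\<sigma> j) - {g}) \<le> v1 (A (\<sigma> 0))" if "\<sigma> j < 2" "g \<in> A (\<sigma> j)" for j g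
    using EFX1 \<sigma>(1) that unfolding EFX_def by blast
  then have player_1: "\<forall>j<2. \<forall>g\<in>A (\<sigma> j). v1 (A (\<sigma> j) - {g}) \<le> v1 (A (\<sigma> 0))"
    using \<sigma> unfolding all_less_2_iff by blast
  have "v2 (A k - {g}) \<le> v2 (A k)" if "k < 2" for k g
    using valuation_mono[OF val2, of "A k - {g}" "A k"] sub[OF that] by auto
  then have player_2: "\<forall>j<2. \<forall>g. v2 (A (\<sigma> j) - {g}) \<le> v2 (A (\<sigma> 1))"
    using \<sigma> prefers unfolding all_less_2_iff by (meson order_trans)
  show ?thesis
    unfolding EFX_def all_less_2_iff using player_1 player_2 by (simp add: all_less_2_iff)
qed

theorem theorem4p3:
  fixes M :: "'g set" and v1 v2 :: "'g set \<Rightarrow> real" and A :: "nat \<Rightarrow> 'g set"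
  assumes "finite M"
    and "valuation M v1" and "valuation M v2"
    and "leximinpp_solution 2 M (\<lambda>_. v1) A"
  shows "EFX 2 (\<lambda>i. if i = 0 then v1 else v2)
           (if v2 (A 0) \<ge> v2 (A 1) then (\<lambda>i. if i = 0 then A 1 else A 0)
            else (\<lambda>i. if i = 0 then A 0 else A 1))"
proof -
  have EFX1: "EFX 2 (\<lambda>_. v1) A" using leximinpp_solution_2_EFX assms(1,2,4) .
  have sub: "A k \<subseteq> M" if "k < 2" for k
    using assms(4) that unfolding leximinpp_solution_def is_allocation_def by blast
  note EFX2 = EFX_2_assign_preferred_bundle[OF EFX1 assms(3) sub]
  show ?thesis
  proof (cases "v2 (A 0) \<ge> v2 (A 1)")
    case True
    then show ?thesis
      using EFX2[of "\<lambda>i. if i = 0 then 1 else 0"] by (simp add: o_def if_distrib)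
  next
    case False
    then show ?thesis
      using EFX2[of "\<lambda>i. if i = 0 then 0 else 1"] by (simp add: o_def if_distrib)
  qed
qed

end
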